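(* Let $(V,E)$ be a finite graph and $p\in[0,1]$. Let $(\eta_t,\sigma_t)_{t\ge0}$ be a continuous-time Markov jump process on $\{0,1\}^E\times\{-1,1\}^V$ with the following rates: (i) if $\eta'=\eta$ and there is $x\in V$ with $\sigma'=\sigma^x$ and $\eta(e)=0$ for all $e\in E_x$, the rate from $(\eta,\sigma)$ to $(\eta',\sigma')$ is $1$; (ii) if $\sigma'=\sigma$ and there is $e\in E$ with $\eta'=\eta^e$, the rate is $p\mathbf 1_{\eta(e)=0}\delta_\sigma(e)+(1-p)\mathbf 1_{\eta(e)=1}$; (iii) all other off-diagonal rates are $0$. Suppose $(\eta_0,\sigma_0)$ is distributed according to $IP$. Then for every $x\in V$, every $\sigma\in\{-1,1\}^V$ and every $s\ge0$, $$\lim_{t\to0}\frac1t\,\mathbb P(\sigma_{t+s}=\sigma^x\mid\sigma_s=\sigma)=(1-p)^{|\{e\in E_x:\ \delta_\sigma(e)=1\}|}.$$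
   Context: Edge configurations $\eta\in\{0,1\}^E$, spin configurations $\sigma\in\{-1,1\}^V$. For $e=\langle x,y\rangle$, $\delta_\sigma(e)=\mathbf 1_{\sigma(x)=\sigma(y)}$. $IP(\eta,\sigma)=\frac1Z\prod_{e\in E}\big(p\mathbf 1_{\eta(e)=1}\delta_\sigma(e)+(1-p)\mathbf 1_{\eta(e)=0}\big)$ with $Z$ the normalizing constant. $E_x$ is the set of edges with endvertex $x$; $\sigma^x$ is $\sigma$ with the spin at $x$ flipped; $\eta^e$ is $\eta$ with the value at edge $e$ changed. *)

theory Defs
  imports "HOL-Probability.Probability"
begin

definition fin_graph :: "'v set \<Rightarrow> 'v set set \<Rightarrow> bool" where
  "fin_graph V E \<longleftrightarrow> finite V \<and> (\<forall>e\<in>E. e \<subseteq> V \<and> card e = 2)"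

type_synonym 'v state = "('v set \<Rightarrow> nat) \<times> ('v \<Rightarrow> int)"

definition states :: "'v set \<Rightarrow> 'v set set \<Rightarrow> 'v state set" where
  "states V E = (E \<rightarrow>\<^sub>E {0, 1}) \<times> (V \<rightarrow>\<^sub>E {-1, 1})"

definition delta :: "('v \<Rightarrow> int) \<Rightarrow> 'v set \<Rightarrow> real" where
  "delta \<sigma> e = (if \<forall>a\<in>e. \<forall>b\<in>e. \<sigma> a = \<sigma> b then 1 else 0)"

definition edges_at :: "'v set set \<Rightarrow> 'v \<Rightarrow> 'v set set" where
  "edges_at E x = {e \<in> E. x \<in> e}"

definition flip_spin :: "('v \<Rightarrow> int) \<Rightarrow> 'v \<Rightarrow> ('v \<Rightarrow> int)" where
  "flip_spin \<sigma> x = \<sigma>(x := - \<sigma> x)"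

definition flip_edge :: "('v set \<Rightarrow> nat) \<Rightarrow> 'v set \<Rightarrow> ('v set \<Rightarrow> nat)" where
  "flip_edge \<eta> e = \<eta>(e := 1 - \<eta> e)"

definition IP_weight :: "'v set set \<Rightarrow> real \<Rightarrow> 'v state \<Rightarrow> real" where
  "IP_weight E p st = (\<Prod>e\<in>E. (if fst st e = 1 then p * delta (snd st) e else 0)
                                + (if fst st e = 0 then 1 - p else 0))"

definition IP :: "'v set \<Rightarrow> 'v set set \<Rightarrow> real \<Rightarrow> 'v state \<Rightarrow> real" where
  "IP V E p st = IP_weight E p st / (\<Sum>u\<in>states V E. IP_weight E p u)"

definition rate :: "'v set \<Rightarrow> 'v set set \<Rightarrow> real \<Rightarrow> 'v state \<Rightarrow> 'v state \<Rightarrow> real" where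
  "rate V E p a b =
     (if snd a \<noteq> snd b \<and> fst b = fst a \<and>
         (\<exists>x\<in>V. snd b = flip_spin (snd a) x \<and> (\<forall>e\<in>edges_at E x. fst a e = 0)) then 1
      else if fst a \<noteq> fst b \<and> snd b = snd a \<and> (\<exists>e\<in>E. fst b = flip_edge (fst a) e) then
        (THE r. \<exists>e\<in>E. fst b = flip_edge (fst a) e \<and>
           r = (if fst a e = 0 then p * delta (snd a) e else 0) + (if fst a e = 1 then 1 - p else 0))
      else 0)"

definition generator :: "'v set \<Rightarrow> 'v set set \<Rightarrow> real \<Rightarrow> 'v state \<Rightarrow> 'v state \<Rightarrow> real" where
  "generator V E p a b =
     (if a = b then - (\<Sum>c\<in>states V E - {a}. rate V E p a c) else rate V E p a b)"

fun mpow :: "'s set \<Rightarrow> ('s \<Rightarrow> 's \<Rightarrow> real) \<Rightarrow> nat \<Rightarrow> 's \<Rightarrow> 's \<Rightarrow> real" where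
  "mpow S Q 0 a b = (if a = b then 1 else 0)"
| "mpow S Q (Suc n) a b = (\<Sum>c\<in>S. Q a c * mpow S Q n c b)"

definition transition :: "'v set \<Rightarrow> 'v set set \<Rightarrow> real \<Rightarrow> real \<Rightarrow> 'v state \<Rightarrow> 'v state \<Rightarrow> real" where
  "transition V E p t a b =
     (\<Sum>n. t ^ n / fact n * mpow (states V E) (generator V E p) n a b)"

definition markov_IP_process ::
  "'v set \<Rightarrow> 'v set set \<Rightarrow> real \<Rightarrow> 'w measure \<Rightarrow> (real \<Rightarrow> 'w \<Rightarrow> 'v state) \<Rightarrow> bool" where
  "markov_IP_process V E p M X \<longleftrightarrow>
     prob_space M \<and>
     (\<forall>t\<ge>0. X t \<in> M \<rightarrow>\<^sub>M count_space UNIV) \<and>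
     (\<forall>n (ts :: nat \<Rightarrow> real) (as :: nat \<Rightarrow> 'v state).
        ts 0 = 0 \<longrightarrow> (\<forall>i<n. ts i \<le> ts (Suc i)) \<longrightarrow> (\<forall>i\<le>n. as i \<in> states V E) \<longrightarrow>
        measure M {\<omega> \<in> space M. \<forall>i\<le>n. X (ts i) \<omega> = as i}
          = IP V E p (as 0) *
            (\<Prod>i<n. transition V E p (ts (Suc i) - ts i) (as i) (as (Suc i))))"

end

theory Submission
  imports Defs
begin

(* The measure IP is reversible for the dynamics. An allowed flip at x leaves every factor of the
   weight unchanged, since all edges at x are closed; an edge flip satisfies detailed balance edge
   by edge. Hence IP is stationary for the generator Q and for P_t = exp(tQ), so the pair
   (X s, X (t + s)) has law IP(a) P_t(a, b). Dividing by t and letting t -> 0 replaces P_t(a, b)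
   by Q(a, b), which for a spin flip at x is 1 if all edges at x are closed and 0 otherwise. The
   limit is therefore the conditional IP-probability, given the spins, that all edges at x are
   closed; given the spins the edges are independent, and an edge at x is closed with
   probability 1 - p if its endpoints agree and with probability 1 otherwise. *)

definition mexp :: "'s set \<Rightarrow> ('s \<Rightarrow> 's \<Rightarrow> real) \<Rightarrow> real \<Rightarrow> 's \<Rightarrow> 's \<Rightarrow> real" where
  "mexp S Q t a b = (\<Sum>n. t ^ n / fact n * mpow S Q n a b)"

lemma summable_exp_series:
  fixes c :: "nat \<Rightarrow> real"
  assumes "\<And>n. \<bar>c n\<bar> \<le> M ^ n"
  shows "summable (\<lambda>n. t ^ n / fact n * c n)"
proof (rule summable_comparison_test[OF _ summable_exp[of "\<bar>t\<bar> * M"]], intro exI allI impI)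
  fix n :: nat
  have "norm (t ^ n / fact n * c n) = \<bar>t\<bar> ^ n * \<bar>c n\<bar> / fact n"
    by (simp add: abs_mult power_abs)
  also have "\<dots> \<le> \<bar>t\<bar> ^ n * M ^ n / fact n"
    by (intro divide_right_mono mult_left_mono assms) auto
  also have "\<dots> = inverse (fact n) * (\<bar>t\<bar> * M) ^ n"
    by (simp add: power_mult_distrib field_simps)
  finally show "norm (t ^ n / fact n * c n) \<le> inverse (fact n) * (\<bar>t\<bar> * M) ^ n" .
qed

lemma exp_series_div_tendsto:
  fixes c :: "nat \<Rightarrow> real"
  assumes bound: "\<And>n. \<bar>c n\<bar> \<le> M ^ n" and "c 0 = 0"
  shows "((\<lambda>t. (\<Sum>n. t ^ n / fact n * c n) / t) \<longlongrightarrow> c 1) (at_right 0)"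
proof -
  \<comment> \<open>Because \<open>c 0 = 0\<close>, dividing the series by \<open>t\<close> yields the power series \<open>g\<close>.\<close>
  define g where "g t = (\<Sum>n. c (Suc n) / fact (Suc n) * t ^ n)" for t :: real
  have shifted: "summable (\<lambda>n. t ^ Suc n / fact (Suc n) * c (Suc n))" for t :: real
    using summable_exp_series[OF bound, of t]
    by (rule iffD2[OF summable_Suc_iff[where f = "\<lambda>n. t ^ n / fact n * c n"]])
  from shifted[of 1] have "isCont g 0"
    unfolding g_def by (intro isCont_powser[where K = 1]) (simp_all add: mult.commute)
  moreover have "g 0 = c 1"
    unfolding g_def using powser_zero[of "\<lambda>n. c (Suc n) / fact (Suc n)"] by simp
  ultimately have "(g \<longlongrightarrow> c 1) (at_right 0)"
    unfolding isCont_def by (metis tendsto_mono[OF at_le[OF subset_UNIV]])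
  moreover have "g t = (\<Sum>n. t ^ n / fact n * c n) / t" if "t \<noteq> 0" for t :: real
  proof -
    have "g t = (\<Sum>n. t ^ Suc n / fact (Suc n) * c (Suc n) / t)"
      unfolding g_def using that by (intro arg_cong[where f = suminf]) (auto simp: fun_eq_iff)
    also have "\<dots> = (\<Sum>n. t ^ Suc n / fact (Suc n) * c (Suc n)) / t"
      by (rule suminf_divide[OF shifted])
    also have "(\<Sum>n. t ^ Suc n / fact (Suc n) * c (Suc n)) = (\<Sum>n. t ^ n / fact n * c n)"
      using suminf_split_head[OF summable_exp_series[OF bound, of t]] \<open>c 0 = 0\<close> by simp
    finally show ?thesis .
  qed
  then have "\<forall>\<^sub>F t in at_right 0. g t = (\<Sum>n. t ^ n / fact n * c n) / t"
    by (auto simp: eventually_at_right_field intro: exI[of _ 1])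
  ultimately show ?thesis
    by (rule Lim_transform_eventually)
qed

lemma abs_mpow_le:
  assumes "finite S" "a \<in> S"
  shows "\<bar>mpow S Q n a b\<bar> \<le> (\<Sum>a\<in>S. \<Sum>c\<in>S. \<bar>Q a c\<bar>) ^ n"
  using assms(2)
proof (induction n arbitrary: a)
  case (Suc n)
  define M where "M = (\<Sum>a\<in>S. \<Sum>c\<in>S. \<bar>Q a c\<bar>)"
  have "\<bar>mpow S Q (Suc n) a b\<bar> \<le> (\<Sum>c\<in>S. \<bar>Q a c\<bar> * \<bar>mpow S Q n c b\<bar>)"
    by (simp add: sum_abs[THEN order_trans] abs_mult)
  also have "\<dots> \<le> (\<Sum>c\<in>S. \<bar>Q a c\<bar>) * M ^ n"
    unfolding sum_distrib_right M_def using Suc.IH by (intro sum_mono mult_left_mono) auto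
  also have "\<dots> \<le> M * M ^ n"
    unfolding M_def using assms(1) Suc.prems
    by (intro mult_right_mono member_le_sum[where f = "\<lambda>a. \<Sum>c\<in>S. \<bar>Q a c\<bar>"] sum_nonneg zero_le_power)
      auto
  finally show ?case by (simp add: M_def)
qed simp

lemma summable_mexp_series:
  "finite S \<Longrightarrow> a \<in> S \<Longrightarrow> summable (\<lambda>n. t ^ n / fact n * mpow S Q n a b)"
  by (rule summable_exp_series[OF abs_mpow_le])

lemma mexp_div_tendsto:
  assumes "finite S" "a \<in> S" "b \<in> S" "a \<noteq> b"
  shows "((\<lambda>t. mexp S Q t a b / t) \<longlongrightarrow> Q a b) (at_right 0)"
proof -
  have "mpow S Q 1 a b = Q a b"
    using assms by (simp add: if_distrib cong: if_cong)
  moreover have "mpow S Q 0 a b = 0"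
    using assms(4) by simp
  ultimately show ?thesis
    using exp_series_div_tendsto[OF abs_mpow_le[OF assms(1,2), where Q = Q and b = b]] by (simp add: mexp_def)
qed

lemma exp_series_eq_zeroth_term:
  fixes c :: "nat \<Rightarrow> real"
  assumes "\<And>n. c (Suc n) = 0"
  shows "(\<Sum>n. t ^ n / fact n * c n) = c 0"
proof -
  have "(\<lambda>n. t ^ n / fact n * c n) = (\<lambda>n. if n = 0 then c 0 else 0)"
    using assms by (auto simp: fun_eq_iff gr0_conv_Suc)
  then show ?thesis using sums_unique[OF sums_single[of 0 "\<lambda>_. c 0"]] by simp
qed

lemma sum_mpow_row:
  assumes "finite S" "a \<in> S" and rows: "\<And>a. a \<in> S \<Longrightarrow> (\<Sum>c\<in>S. Q a c) = 0"
  shows "(\<Sum>b\<in>S. mpow S Q n a b) = (if n = 0 then 1 else 0)"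
  using assms(2)
proof (induction n arbitrary: a)
  case (Suc n)
  have "(\<Sum>b\<in>S. mpow S Q (Suc n) a b) = (\<Sum>c\<in>S. Q a c * (\<Sum>b\<in>S. mpow S Q n c b))"
    unfolding mpow.simps sum_distrib_left by (rule sum.swap)
  also have "\<dots> = (\<Sum>c\<in>S. Q a c) * (if n = 0 then 1 else 0)"
    using Suc.IH by (simp add: sum_distrib_right)
  finally show ?case using rows[OF Suc.prems] by simp
qed (use assms(1) in simp)

lemma mexp_row_sum:
  assumes "finite S" "a \<in> S" "\<And>a. a \<in> S \<Longrightarrow> (\<Sum>c\<in>S. Q a c) = 0"
  shows "(\<Sum>b\<in>S. mexp S Q t a b) = 1"
proof -
  have "(\<Sum>b\<in>S. mexp S Q t a b) = (\<Sum>n. t ^ n / fact n * (\<Sum>b\<in>S. mpow S Q n a b))"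
    unfolding mexp_def sum_distrib_left
    by (rule suminf_sum[symmetric]) (rule summable_mexp_series[OF assms(1,2)])
  also have "\<dots> = (\<Sum>n. t ^ n / fact n * (if n = 0 then 1 else 0))"
    by (simp only: sum_mpow_row[OF assms])
  also have "\<dots> = 1"
    by (subst exp_series_eq_zeroth_term) simp_all
  finally show ?thesis .
qed

lemma mexp_stationary:
  assumes "finite S" "b \<in> S" and inv: "\<And>c. c \<in> S \<Longrightarrow> (\<Sum>a\<in>S. \<pi> a * Q a c) = 0"
  shows "(\<Sum>a\<in>S. \<pi> a * mexp S Q t a b) = \<pi> b"
proof -
  have "(\<Sum>a\<in>S. \<pi> a * mpow S Q (Suc n) a b) = (\<Sum>c\<in>S. (\<Sum>a\<in>S. \<pi> a * Q a c) * mpow S Q n c b)" for n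
    unfolding mpow.simps sum_distrib_left sum_distrib_right mult.assoc by (rule sum.swap)
  then have vanish: "(\<Sum>a\<in>S. \<pi> a * mpow S Q (Suc n) a b) = 0" for n
    using inv by simp
  have "(\<Sum>a\<in>S. \<pi> a * mexp S Q t a b)
      = (\<Sum>a\<in>S. \<Sum>n. \<pi> a * (t ^ n / fact n * mpow S Q n a b))"
    unfolding mexp_def using assms(1) by (intro sum.cong refl suminf_mult[symmetric] summable_mexp_series)
  also have "\<dots> = (\<Sum>n. \<Sum>a\<in>S. \<pi> a * (t ^ n / fact n * mpow S Q n a b))"
    using assms(1) by (intro suminf_sum[symmetric] summable_mult summable_mexp_series)
  also have "\<dots> = (\<Sum>n. t ^ n / fact n * (\<Sum>a\<in>S. \<pi> a * mpow S Q n a b))"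
    by (simp only: sum_distrib_left mult.left_commute)
  also have "\<dots> = (\<Sum>a\<in>S. \<pi> a * mpow S Q 0 a b)"
    by (rule exp_series_eq_zeroth_term) (rule vanish)
  finally show ?thesis
    using assms(1,2) by (simp add: if_distrib cong: if_cong)
qed

lemma transition_eq_mexp: "transition V E p t = mexp (states V E) (generator V E p) t"
  by (simp add: fun_eq_iff transition_def mexp_def)

lemma (in prob_space) prob_eq_sum_partition:
  assumes T: "finite T" and disj: "disjoint_family_on A T" and A: "\<And>i. i \<in> T \<Longrightarrow> A i \<in> events"
    and total: "(\<Sum>i\<in>T. prob (A i)) = 1" and B: "B \<in> events"
  shows "prob B = (\<Sum>i\<in>T. prob (B \<inter> A i))"
proof -
  define U where "U = (\<Union>i\<in>T. A i)"
  have U: "U \<in> events" unfolding U_def using T A by auto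
  have "prob U = 1"
    unfolding U_def using measure_finite_Union[OF T _ disj] A total by (simp add: image_subset_iff)
  moreover have "prob (B - U) \<le> prob (space M - U)"
    using B U sets.sets_into_space by (intro finite_measure_mono) auto
  ultimately have "prob (B - U) = 0"
    using prob_compl[OF U] measure_nonneg[of M "B - U"] by linarith
  then have "prob B = prob (B \<inter> U)"
    using finite_measure_Diff'[OF B U] by simp
  also have "B \<inter> U = (\<Union>i\<in>T. B \<inter> A i)" unfolding U_def by blast
  also have "prob \<dots> = (\<Sum>i\<in>T. prob (B \<inter> A i))"
    using T A B disj by (intro measure_finite_Union) (auto simp: disjoint_family_on_def)
  finally show ?thesis .
qed

lemma generator_row_sum:
  assumes "finite (states V E)" "a \<in> states V E"
  shows "(\<Sum>c\<in>states V E. generator V E p a c) = 0"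
proof -
  have "(\<Sum>c\<in>states V E - {a}. generator V E p a c) = (\<Sum>c\<in>states V E - {a}. rate V E p a c)"
    by (rule sum.cong) (auto simp: generator_def)
  then show ?thesis
    using sum.remove[OF assms, of "generator V E p a"] by (simp add: generator_def)
qed

lemma generator_stationary_if_detailed_balance:
  assumes "finite (states V E)" "b \<in> states V E"
    and balance: "\<And>a. a \<in> states V E \<Longrightarrow> w a * rate V E p a b = w b * rate V E p b a"
  shows "(\<Sum>a\<in>states V E. w a * generator V E p a b) = 0"
proof -
  have "(\<Sum>a\<in>states V E - {b}. w a * generator V E p a b) = w b * (\<Sum>a\<in>states V E - {b}. rate V E p b a)"
    unfolding sum_distrib_left by (rule sum.cong) (auto simp: generator_def balance)
  then show ?thesis
    using sum.remove[OF assms(1,2), of "\<lambda>a. w a * generator V E p a b"] by (simp add: generator_def)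
qed

lemma markov_IP_process_event:
  assumes "markov_IP_process V E p M X" "0 \<le> u"
  shows "{\<omega> \<in> space M. P (X u \<omega>)} \<in> sets M"
proof -
  have "X u \<in> M \<rightarrow>\<^sub>M count_space UNIV"
    using assms by (simp add: markov_IP_process_def)
  moreover have "{\<omega> \<in> space M. P (X u \<omega>)} = X u -` {a. P a} \<inter> space M" by auto
  ultimately show ?thesis by (metis measurable_sets sets_count_space UNIV_I Pow_UNIV)
qed

lemma markov_IP_process_cylinder3:
  assumes "markov_IP_process V E p M X" "0 \<le> s" "0 \<le> t" "a0 \<in> states V E" "a \<in> states V E" "b \<in> states V E"
  shows "measure M {\<omega> \<in> space M. X 0 \<omega> = a0 \<and> X s \<omega> = a \<and> X (t + s) \<omega> = b}
       = IP V E p a0 * transition V E p s a0 a * transition V E p t a b"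
proof -
  have fdd: "\<And>n ts as. ts 0 = 0 \<Longrightarrow> (\<forall>i<n. ts i \<le> ts (Suc i)) \<Longrightarrow> (\<forall>i\<le>n. as i \<in> states V E) \<Longrightarrow>
      measure M {\<omega> \<in> space M. \<forall>i\<le>n. X (ts i) \<omega> = as i}
        = IP V E p (as 0) * (\<Prod>i<n. transition V E p (ts (Suc i) - ts i) (as i) (as (Suc i)))"
    using assms(1) unfolding markov_IP_process_def by blast
  define ts :: "nat \<Rightarrow> real" where "ts i = (if i = 0 then 0 else if i = 1 then s else t + s)" for i
  define as :: "nat \<Rightarrow> _" where "as i = (if i = 0 then a0 else if i = 1 then a else b)" for i
  have "measure M {\<omega> \<in> space M. \<forall>i\<le>2. X (ts i) \<omega> = as i}
      = IP V E p (as 0) * (\<Prod>i<2. transition V E p (ts (Suc i) - ts i) (as i) (as (Suc i)))"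
    by (rule fdd) (use assms in \<open>auto simp: ts_def as_def numeral_2_eq_2 less_Suc_eq le_Suc_eq\<close>)
  moreover have "{\<omega> \<in> space M. \<forall>i\<le>2. X (ts i) \<omega> = as i}
      = {\<omega> \<in> space M. X 0 \<omega> = a0 \<and> X s \<omega> = a \<and> X (t + s) \<omega> = b}"
    by (auto simp: ts_def as_def numeral_2_eq_2 le_Suc_eq)
  ultimately show ?thesis by (simp add: ts_def as_def numeral_2_eq_2)
qed

definition edge_weight :: "real \<Rightarrow> ('v \<Rightarrow> int) \<Rightarrow> 'v set \<Rightarrow> nat \<Rightarrow> real" where
  "edge_weight p \<sigma> e v = (if v = 1 then p * delta \<sigma> e else 0) + (if v = 0 then 1 - p else 0)"

definition edge_flip_rate :: "real \<Rightarrow> ('v \<Rightarrow> int) \<Rightarrow> 'v set \<Rightarrow> nat \<Rightarrow> real" where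
  "edge_flip_rate p \<sigma> e v = (if v = 0 then p * delta \<sigma> e else 0) + (if v = 1 then 1 - p else 0)"

definition closed_at :: "'v set set \<Rightarrow> 'v \<Rightarrow> ('v set \<Rightarrow> nat) \<Rightarrow> bool" where
  "closed_at E x \<eta> \<longleftrightarrow> (\<forall>e\<in>edges_at E x. \<eta> e = 0)"

definition spin_move :: "'v set \<Rightarrow> 'v set set \<Rightarrow> 'v state \<Rightarrow> 'v state \<Rightarrow> bool" where
  "spin_move V E a b \<longleftrightarrow> snd a \<noteq> snd b \<and> fst b = fst a \<and>
     (\<exists>x\<in>V. snd b = flip_spin (snd a) x \<and> closed_at E x (fst a))"

definition edge_move :: "'v set set \<Rightarrow> 'v state \<Rightarrow> 'v state \<Rightarrow> bool" where
  "edge_move E a b \<longleftrightarrow> fst a \<noteq> fst b \<and> snd b = snd a \<and> (\<exists>e\<in>E. fst b = flip_edge (fst a) e)"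

lemma IP_weight_eq_prod: "IP_weight E p a = (\<Prod>e\<in>E. edge_weight p (snd a) e (fst a e))"
  by (simp add: IP_weight_def edge_weight_def)

lemma delta_cases: "delta \<sigma> e = 0 \<or> delta \<sigma> e = 1"
  by (simp add: delta_def)

lemma delta_cong: "(\<And>u. u \<in> e \<Longrightarrow> \<sigma>' u = \<sigma> u) \<Longrightarrow> delta \<sigma>' e = delta \<sigma> e"
  by (simp add: delta_def)

lemma flip_spin_flip_spin [simp]: "flip_spin (flip_spin \<sigma> x) x = \<sigma>"
  by (simp add: flip_spin_def)

lemma flip_edge_flip_edge: "\<eta> e \<le> 1 \<Longrightarrow> flip_edge (flip_edge \<eta> e) e = \<eta>"
  by (auto simp: flip_edge_def fun_eq_iff)

lemma flip_spin_neq: "\<sigma> \<in> V \<rightarrow>\<^sub>E {-1, 1} \<Longrightarrow> x \<in> V \<Longrightarrow> flip_spin \<sigma> x \<noteq> \<sigma>"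
  by (auto simp: flip_spin_def fun_eq_iff PiE_iff)

lemma flip_spin_eq_iff:
  assumes "\<sigma> \<in> V \<rightarrow>\<^sub>E {-1, 1}" "x \<in> V"
  shows "flip_spin \<sigma> y = flip_spin \<sigma> x \<longleftrightarrow> y = x"
proof
  assume eq: "flip_spin \<sigma> y = flip_spin \<sigma> x"
  show "y = x"
  proof (rule ccontr)
    assume "y \<noteq> x"
    then have "\<sigma> x = - \<sigma> x"
      using fun_cong[OF eq, of x] by (simp add: flip_spin_def)
    then show False using assms by (auto simp: PiE_iff)
  qed
qed simp

lemma flip_spin_PiE: "\<sigma> \<in> V \<rightarrow>\<^sub>E {-1, 1} \<Longrightarrow> x \<in> V \<Longrightarrow> flip_spin \<sigma> x \<in> V \<rightarrow>\<^sub>E {-1, 1}"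
  by (auto simp: flip_spin_def PiE_iff extensional_def)

lemma spin_move_sym: "spin_move V E a b \<Longrightarrow> spin_move V E b a"
  unfolding spin_move_def closed_at_def by (metis flip_spin_flip_spin)

lemma rate_spin_move: "spin_move V E a b \<Longrightarrow> rate V E p a b = 1"
  unfolding rate_def spin_move_def closed_at_def by auto

lemma rate_no_move: "\<not> spin_move V E a b \<Longrightarrow> \<not> edge_move E a b \<Longrightarrow> rate V E p a b = 0"
  unfolding rate_def spin_move_def edge_move_def closed_at_def by auto

lemma IP_weight_spin_move:
  assumes "spin_move V E a b"
  shows "IP_weight E p b = IP_weight E p a"
proof -
  obtain x where fst_b: "fst b = fst a" and snd_b: "snd b = flip_spin (snd a) x"
    and closed: "closed_at E x (fst a)"
    using assms unfolding spin_move_def by blast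
  have "edge_weight p (snd b) e (fst b e) = edge_weight p (snd a) e (fst a e)" if "e \<in> E" for e
  proof (cases "x \<in> e")
    case True
    then show ?thesis using closed that fst_b by (simp add: closed_at_def edges_at_def edge_weight_def)
  next
    case False
    then have "delta (snd b) e = delta (snd a) e"
      using snd_b by (intro delta_cong) (auto simp: flip_spin_def)
    then show ?thesis using fst_b by (simp add: edge_weight_def)
  qed
  then show ?thesis unfolding IP_weight_eq_prod by (rule prod.cong[OF refl])
qed

locale ip_graph =
  fixes V :: "'v set" and E :: "'v set set" and p :: real
  assumes fin_graph: "fin_graph V E" and p_nonneg: "0 \<le> p" and p_le_one: "p \<le> 1"
begin

abbreviation "S \<equiv> states V E"
abbreviation "Q \<equiv> generator V E p"

lemma finite_V: "finite V"
  using fin_graph by (simp add: fin_graph_def)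

lemma finite_E: "finite E"
proof -
  have "E \<subseteq> Pow V" using fin_graph by (auto simp: fin_graph_def)
  then show ?thesis using finite_V finite_subset by blast
qed

lemma finite_states: "finite S"
  unfolding states_def using finite_V finite_E by (simp add: finite_PiE)

lemma states_edge_cases: "a \<in> S \<Longrightarrow> e \<in> E \<Longrightarrow> fst a e = 0 \<or> fst a e = 1"
  by (cases a) (auto simp: states_def PiE_iff)

lemma flip_edge_back:
  assumes "a \<in> S" "e \<in> E" "fst b = flip_edge (fst a) e"
  shows "fst a = flip_edge (fst b) e"
  using assms flip_edge_flip_edge states_edge_cases[OF assms(1,2)] by (metis le_refl zero_le_one)

lemma edge_move_sym: "a \<in> S \<Longrightarrow> edge_move E a b \<Longrightarrow> edge_move E b a"
  unfolding edge_move_def by (metis flip_edge_back)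

lemma flip_edge_inj:
  assumes "a \<in> S" "e \<in> E" "flip_edge (fst a) e = flip_edge (fst a) e'"
  shows "e = e'"
proof (rule ccontr)
  assume "e \<noteq> e'"
  then have "1 - fst a e = fst a e"
    using fun_cong[OF assms(3), of e] by (simp add: flip_edge_def)
  then show False using states_edge_cases[OF assms(1,2)] by auto
qed

lemma rate_edge_move:
  assumes "a \<in> S" "e \<in> E" "fst b = flip_edge (fst a) e" "fst a \<noteq> fst b" "snd b = snd a"
  shows "rate V E p a b = edge_flip_rate p (snd a) e (fst a e)"
proof -
  have "rate V E p a b = (THE r. \<exists>e\<in>E. fst b = flip_edge (fst a) e \<and> r = edge_flip_rate p (snd a) e (fst a e))"
    using assms unfolding rate_def edge_flip_rate_def by auto
  also have "\<dots> = edge_flip_rate p (snd a) e (fst a e)"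
    using assms flip_edge_inj[OF assms(1,2)] by (intro the_equality) auto
  finally show ?thesis .
qed

lemma IP_weight_edge_move:
  assumes a: "a \<in> S" and e: "e \<in> E" and fst_b: "fst b = flip_edge (fst a) e" and snd_b: "snd b = snd a"
  shows "IP_weight E p a * edge_flip_rate p (snd a) e (fst a e)
       = IP_weight E p b * edge_flip_rate p (snd b) e (fst b e)"
proof -
  define R where "R = (\<Prod>e'\<in>E - {e}. edge_weight p (snd a) e' (fst a e'))"
  have "(\<Prod>e'\<in>E - {e}. edge_weight p (snd b) e' (fst b e')) = R"
    unfolding R_def using fst_b snd_b by (intro prod.cong) (auto simp: flip_edge_def)
  then have "IP_weight E p b = edge_weight p (snd a) e (1 - fst a e) * R"
    unfolding IP_weight_eq_prod prod.remove[OF finite_E e] using fst_b snd_b by (simp add: flip_edge_def)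
  moreover have "IP_weight E p a = edge_weight p (snd a) e (fst a e) * R"
    unfolding IP_weight_eq_prod R_def by (rule prod.remove[OF finite_E e])
  ultimately show ?thesis
    using states_edge_cases[OF a e] fst_b snd_b
    by (auto simp: edge_weight_def edge_flip_rate_def flip_edge_def)
qed

lemma IP_weight_detailed_balance:
  assumes a: "a \<in> S" and b: "b \<in> S"
  shows "IP_weight E p a * rate V E p a b = IP_weight E p b * rate V E p b a"
proof (cases "spin_move V E a b")
  case True
  then show ?thesis
    using spin_move_sym rate_spin_move IP_weight_spin_move by metis
next
  case no_spin: False
  then have no_spin': "\<not> spin_move V E b a" using spin_move_sym by blast
  show ?thesis
  proof (cases "edge_move E a b")
    case True
    then obtain e where e: "e \<in> E" "fst b = flip_edge (fst a) e" "fst a \<noteq> fst b" "snd b = snd a"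
      unfolding edge_move_def by blast
    then have "fst a = flip_edge (fst b) e" by (intro flip_edge_back[OF a])
    then have "rate V E p b a = edge_flip_rate p (snd b) e (fst b e)"
      using e by (intro rate_edge_move[OF b]) auto
    then show ?thesis
      using rate_edge_move[OF a e(1-4)] IP_weight_edge_move[OF a e(1,2,4)] by simp
  next
    case False
    moreover have "\<not> edge_move E b a" using False edge_move_sym[OF b] by blast
    ultimately show ?thesis using no_spin no_spin' by (simp add: rate_no_move)
  qed
qed

lemma edge_weight_nonneg: "edge_weight p \<sigma> e v \<ge> 0"
  using delta_cases[of \<sigma> e] p_nonneg p_le_one by (auto simp: edge_weight_def)

lemma IP_weight_nonneg: "IP_weight E p a \<ge> 0"
  unfolding IP_weight_eq_prod by (intro prod_nonneg edge_weight_nonneg)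

lemma sum_IP_weight_pos: "(\<Sum>u\<in>S. IP_weight E p u) > 0"
proof -
  define u :: "'v state" where "u = (if p > 0 then (\<lambda>e\<in>E. 1) else (\<lambda>e\<in>E. 0), \<lambda>v\<in>V. 1)"
  have "u \<in> S" unfolding u_def states_def by auto
  have "edge_weight p (snd u) e (fst u e) > 0" if "e \<in> E" for e
  proof -
    have "delta (\<lambda>v\<in>V. 1) e = 1"
      using fin_graph that by (auto simp: fin_graph_def delta_def)
    then show ?thesis using that p_le_one by (auto simp: u_def edge_weight_def)
  qed
  then have "IP_weight E p u > 0"
    unfolding IP_weight_eq_prod by (rule prod_pos)
  also have "\<dots> \<le> (\<Sum>u\<in>S. IP_weight E p u)"
    using \<open>u \<in> S\<close> finite_states by (intro member_le_sum IP_weight_nonneg)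
  finally show ?thesis .
qed

lemma sum_IP: "(\<Sum>a\<in>S. IP V E p a) = 1"
  using sum_IP_weight_pos by (simp add: IP_def sum_divide_distrib[symmetric])

lemma IP_generator_stationary:
  assumes "b \<in> S"
  shows "(\<Sum>a\<in>S. IP V E p a * Q a b) = 0"
proof (rule generator_stationary_if_detailed_balance[OF finite_states assms])
  fix a assume "a \<in> S"
  then show "IP V E p a * rate V E p a b = IP V E p b * rate V E p b a"
    using IP_weight_detailed_balance[OF \<open>a \<in> S\<close> assms] by (simp add: IP_def)
qed

lemma transition_row_sum: "a \<in> S \<Longrightarrow> (\<Sum>b\<in>S. transition V E p t a b) = 1"
  unfolding transition_eq_mexp using finite_states
  by (rule mexp_row_sum) (use finite_states generator_row_sum in auto)

lemma IP_transition_stationary: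
  assumes "b \<in> S"
  shows "(\<Sum>a\<in>S. IP V E p a * transition V E p t a b) = IP V E p b"
  unfolding transition_eq_mexp by (rule mexp_stationary[OF finite_states assms IP_generator_stationary])

lemma generator_flip_spin:
  assumes a: "a \<in> S" "snd a = \<sigma>" and \<sigma>: "\<sigma> \<in> V \<rightarrow>\<^sub>E {-1, 1}" and x: "x \<in> V"
    and b: "snd b = flip_spin \<sigma> x"
  shows "Q a b = (if fst b = fst a \<and> closed_at E x (fst a) then 1 else 0)"
proof -
  have "snd b \<noteq> snd a" using flip_spin_neq[OF \<sigma> x] a b by simp
  then have "Q a b = rate V E p a b" and "\<not> edge_move E a b"
    by (auto simp: generator_def edge_move_def)
  moreover have "spin_move V E a b \<longleftrightarrow> fst b = fst a \<and> closed_at E x (fst a)"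
    using \<open>snd b \<noteq> snd a\<close> a b x flip_spin_eq_iff[OF \<sigma>] unfolding spin_move_def by auto
  ultimately show ?thesis
    by (cases "spin_move V E a b") (simp_all add: rate_spin_move rate_no_move)
qed

lemma sum_generator_flip_spin:
  assumes a: "a \<in> S" "snd a = \<sigma>" and \<sigma>: "\<sigma> \<in> V \<rightarrow>\<^sub>E {-1, 1}" and x: "x \<in> V"
  shows "(\<Sum>b\<in>S. if snd b = flip_spin \<sigma> x then Q a b else 0) = (if closed_at E x (fst a) then 1 else 0)"
proof -
  define k where "k = (fst a, flip_spin \<sigma> x)"
  have "k \<in> S" using a flip_spin_PiE[OF \<sigma> x] by (cases a) (simp add: k_def states_def)
  have "(\<Sum>b\<in>S. if snd b = flip_spin \<sigma> x then Q a b else 0)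
      = (\<Sum>b\<in>S. if b = k then (if closed_at E x (fst a) then 1 else 0) else 0)"
    using generator_flip_spin[OF a \<sigma> x] by (intro sum.cong refl) (auto simp: k_def prod_eq_iff)
  then show ?thesis using \<open>k \<in> S\<close> finite_states by simp
qed

lemma sum_states_spin_fibre:
  assumes "\<sigma> \<in> V \<rightarrow>\<^sub>E {-1, 1}"
  shows "(\<Sum>a\<in>S. if snd a = \<sigma> then g a else 0) = (\<Sum>\<eta>\<in>E \<rightarrow>\<^sub>E {0, 1}. g (\<eta>, \<sigma>))"
proof -
  have "(\<Sum>a\<in>S. if snd a = \<sigma> then g a else 0)
      = (\<Sum>\<eta>\<in>E \<rightarrow>\<^sub>E {0, 1}. \<Sum>\<tau>\<in>V \<rightarrow>\<^sub>E {-1, 1}. if \<tau> = \<sigma> then g (\<eta>, \<tau>) else 0)"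
    unfolding states_def by (subst sum.cartesian_product) (rule sum.cong, auto)
  also have "\<dots> = (\<Sum>\<eta>\<in>E \<rightarrow>\<^sub>E {0, 1}. g (\<eta>, \<sigma>))"
    using assms finite_V by (simp add: finite_PiE)
  finally show ?thesis .
qed

lemma sum_IP_weight_closed_on:
  assumes "F \<subseteq> E"
  shows "(\<Sum>\<eta>\<in>E \<rightarrow>\<^sub>E {0, 1}. if \<forall>e\<in>F. \<eta> e = 0 then IP_weight E p (\<eta>, \<sigma>) else 0)
       = (\<Prod>e\<in>E. \<Sum>v\<in>(if e \<in> F then {0} else {0, 1}). edge_weight p \<sigma> e v)"
proof -
  define B where "B e = (if e \<in> F then {0} else {0, 1::nat})" for e
  have "(\<Sum>\<eta>\<in>E \<rightarrow>\<^sub>E {0, 1}. if \<forall>e\<in>F. \<eta> e = 0 then IP_weight E p (\<eta>, \<sigma>) else 0)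
      = (\<Sum>\<eta>\<in>PiE E B. \<Prod>e\<in>E. edge_weight p \<sigma> e (\<eta> e))"
  proof (rule sum.mono_neutral_cong_right)
    show "finite (E \<rightarrow>\<^sub>E {0::nat, 1})" using finite_E by (simp add: finite_PiE)
    show "PiE E B \<subseteq> E \<rightarrow>\<^sub>E {0, 1}" by (rule PiE_mono) (simp add: B_def)
    show "\<forall>\<eta>\<in>(E \<rightarrow>\<^sub>E {0, 1}) - PiE E B.
        (if \<forall>e\<in>F. \<eta> e = 0 then IP_weight E p (\<eta>, \<sigma>) else 0) = 0"
      by (auto simp: B_def PiE_iff)
    show "(if \<forall>e\<in>F. \<eta> e = 0 then IP_weight E p (\<eta>, \<sigma>) else 0) = (\<Prod>e\<in>E. edge_weight p \<sigma> e (\<eta> e))"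
      if "\<eta> \<in> PiE E B" for \<eta>
    proof -
      have "\<eta> e = 0" if "e \<in> F" for e
        using PiE_mem[OF \<open>\<eta> \<in> PiE E B\<close> subsetD[OF assms that]] that by (simp add: B_def)
      then show ?thesis by (simp add: IP_weight_eq_prod)
    qed
  qed
  also have "\<dots> = (\<Prod>e\<in>E. \<Sum>v\<in>B e. edge_weight p \<sigma> e v)"
    by (rule prod_sum_PiE[symmetric]) (simp_all add: finite_E B_def)
  finally show ?thesis unfolding B_def .
qed

lemma IP_closed_fibre_ratio:
  assumes \<sigma>: "\<sigma> \<in> V \<rightarrow>\<^sub>E {-1, 1}" and pos: "(\<Sum>a\<in>S. if snd a = \<sigma> then IP V E p a else 0) > 0"
  shows "(\<Sum>a\<in>S. if snd a = \<sigma> \<and> closed_at E x (fst a) then IP V E p a else 0)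
         / (\<Sum>a\<in>S. if snd a = \<sigma> then IP V E p a else 0)
       = (1 - p) ^ card {e \<in> edges_at E x. delta \<sigma> e = 1}"
proof -
  define Z where "Z = (\<Sum>u\<in>S. IP_weight E p u)"
  define w where "w F = (\<Prod>e\<in>E. \<Sum>v\<in>(if e \<in> F then {0} else {0, 1}). edge_weight p \<sigma> e v)" for F
  have fibre_sum: "(\<Sum>a\<in>S. if snd a = \<sigma> \<and> (\<forall>e\<in>F. fst a e = 0) then IP V E p a else 0) = w F / Z"
    if "F \<subseteq> E" for F
  proof -
    have "(\<Sum>a\<in>S. if snd a = \<sigma> \<and> (\<forall>e\<in>F. fst a e = 0) then IP V E p a else 0)
        = (\<Sum>a\<in>S. if snd a = \<sigma> then (if \<forall>e\<in>F. fst a e = 0 then IP_weight E p a else 0) else 0) / Z"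
      unfolding sum_divide_distrib by (intro sum.cong refl) (simp add: IP_def Z_def)
    also have "(\<Sum>a\<in>S. if snd a = \<sigma> then (if \<forall>e\<in>F. fst a e = 0 then IP_weight E p a else 0) else 0)
        = (\<Sum>\<eta>\<in>E \<rightarrow>\<^sub>E {0, 1}. if \<forall>e\<in>F. \<eta> e = 0 then IP_weight E p (\<eta>, \<sigma>) else 0)"
      by (simp add: sum_states_spin_fibre[OF \<sigma>])
    also have "\<dots> = w F"
      unfolding w_def by (rule sum_IP_weight_closed_on[OF that])
    finally show ?thesis .
  qed
  have num: "(\<Sum>a\<in>S. if snd a = \<sigma> \<and> closed_at E x (fst a) then IP V E p a else 0) = w (edges_at E x) / Z"
    using fibre_sum[of "edges_at E x"] by (simp add: closed_at_def edges_at_def)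
  have den: "(\<Sum>a\<in>S. if snd a = \<sigma> then IP V E p a else 0) = w {} / Z"
    using fibre_sum[of "{}"] by simp
  have "w {} \<noteq> 0" using pos den by auto
  then have nonzero: "edge_weight p \<sigma> e 0 + edge_weight p \<sigma> e 1 \<noteq> 0" if "e \<in> E" for e
    using that finite_E by (auto simp: w_def prod_zero_iff)
  have "w (edges_at E x) / w {}
      = (\<Prod>e\<in>E. (\<Sum>v\<in>(if e \<in> edges_at E x then {0} else {0, 1}). edge_weight p \<sigma> e v)
                  / (\<Sum>v\<in>{0, 1}. edge_weight p \<sigma> e v))"
    unfolding w_def by (simp add: prod_dividef)
  also have "\<dots> = (\<Prod>e\<in>E. if e \<in> edges_at E x \<and> delta \<sigma> e = 1 then 1 - p else 1)"
    using nonzero delta_cases by (intro prod.cong refl) (force simp: edge_weight_def)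
  also have "\<dots> = (\<Prod>e\<in>{e \<in> E. e \<in> edges_at E x \<and> delta \<sigma> e = 1}. 1 - p)"
    by (rule prod.inter_filter[symmetric, OF finite_E])
  also have "{e \<in> E. e \<in> edges_at E x \<and> delta \<sigma> e = 1} = {e \<in> edges_at E x. delta \<sigma> e = 1}"
    by (auto simp: edges_at_def)
  finally show ?thesis
    using num den sum_IP_weight_pos by (simp add: Z_def)
qed

lemma sum_cylinders:
  "(\<Sum>a0\<in>S. \<Sum>a\<in>S. \<Sum>b\<in>S. if P a \<and> R b
      then IP V E p a0 * transition V E p s a0 a * transition V E p t a b else 0)
   = (\<Sum>a\<in>S. \<Sum>b\<in>S. if P a \<and> R b then IP V E p a * transition V E p t a b else 0)"
proof -
  have "(\<Sum>a0\<in>S. \<Sum>a\<in>S. \<Sum>b\<in>S. if P a \<and> R b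
          then IP V E p a0 * transition V E p s a0 a * transition V E p t a b else 0)
      = (\<Sum>a\<in>S. \<Sum>b\<in>S. \<Sum>a0\<in>S. if P a \<and> R b
          then IP V E p a0 * transition V E p s a0 a * transition V E p t a b else 0)"
    by (subst sum.swap) (intro sum.cong refl sum.swap)
  also have "\<dots> = (\<Sum>a\<in>S. \<Sum>b\<in>S. if P a \<and> R b then IP V E p a * transition V E p t a b else 0)"
  proof (intro sum.cong refl)
    fix a b assume "a \<in> S"
    show "(\<Sum>a0\<in>S. if P a \<and> R b
          then IP V E p a0 * transition V E p s a0 a * transition V E p t a b else 0)
        = (if P a \<and> R b then IP V E p a * transition V E p t a b else 0)"
    proof (cases "P a \<and> R b")
      case True
      then show ?thesis
        using IP_transition_stationary[OF \<open>a \<in> S\<close>, of s] by (simp add: sum_distrib_right[symmetric])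
    next
      case False
      then show ?thesis by (simp only: if_False sum.neutral_const)
    qed
  qed
  finally show ?thesis .
qed

lemma sum_cylinder_probs:
  assumes "markov_IP_process V E p M X" "0 \<le> s" "0 \<le> t"
  shows "(\<Sum>\<tau>\<in>S \<times> S \<times> S. if P (fst (snd \<tau>)) \<and> R (snd (snd \<tau>)) then
           measure M {\<omega> \<in> space M. X 0 \<omega> = fst \<tau> \<and> X s \<omega> = fst (snd \<tau>) \<and> X (t + s) \<omega> = snd (snd \<tau>)}
         else 0)
       = (\<Sum>a\<in>S. \<Sum>b\<in>S. if P a \<and> R b then IP V E p a * transition V E p t a b else 0)"
proof -
  have "(\<Sum>\<tau>\<in>S \<times> S \<times> S. if P (fst (snd \<tau>)) \<and> R (snd (snd \<tau>)) then
           measure M {\<omega> \<in> space M. X 0 \<omega> = fst \<tau> \<and> X s \<omega> = fst (snd \<tau>) \<and> X (t + s) \<omega> = snd (snd \<tau>)}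
         else 0)
      = (\<Sum>a0\<in>S. \<Sum>a\<in>S. \<Sum>b\<in>S. if P a \<and> R b
          then measure M {\<omega> \<in> space M. X 0 \<omega> = a0 \<and> X s \<omega> = a \<and> X (t + s) \<omega> = b} else 0)"
    by (simp add: sum.cartesian_product split_def)
  also have "\<dots> = (\<Sum>a0\<in>S. \<Sum>a\<in>S. \<Sum>b\<in>S. if P a \<and> R b
      then IP V E p a0 * transition V E p s a0 a * transition V E p t a b else 0)"
    using markov_IP_process_cylinder3[OF assms] by (intro sum.cong refl) simp
  finally show ?thesis unfolding sum_cylinders .
qed

lemma two_time_marginal:
  assumes X: "markov_IP_process V E p M X" and "0 \<le> s" "0 \<le> t"
  shows "measure M {\<omega> \<in> space M. P (X s \<omega>) \<and> R (X (t + s) \<omega>)}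
       = (\<Sum>a\<in>S. \<Sum>b\<in>S. if P a \<and> R b then IP V E p a * transition V E p t a b else 0)"
proof -
  interpret prob_space M using X by (simp add: markov_IP_process_def)
  define A where "A \<tau> = {\<omega> \<in> space M. X 0 \<omega> = fst \<tau> \<and> X s \<omega> = fst (snd \<tau>) \<and> X (t + s) \<omega> = snd (snd \<tau>)}"
    for \<tau>
  have events: "{\<omega> \<in> space M. Pr (X u \<omega>)} \<in> events" if "0 \<le> u" for u Pr
    using markov_IP_process_event[OF X that] .
  have A_events: "A \<tau> \<in> events" for \<tau>
  proof -
    have "A \<tau> = {\<omega> \<in> space M. X 0 \<omega> = fst \<tau>} \<inter> {\<omega> \<in> space M. X s \<omega> = fst (snd \<tau>)}
        \<inter> {\<omega> \<in> space M. X (t + s) \<omega> = snd (snd \<tau>)}"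
      by (auto simp: A_def)
    then show ?thesis using events assms by simp
  qed
  have sum_A: "(\<Sum>\<tau>\<in>S \<times> S \<times> S. if P (fst (snd \<tau>)) \<and> R (snd (snd \<tau>)) then prob (A \<tau>) else 0)
      = (\<Sum>a\<in>S. \<Sum>b\<in>S. if P a \<and> R b then IP V E p a * transition V E p t a b else 0)" for P R
    unfolding A_def by (rule sum_cylinder_probs[OF assms])
  have disjoint: "disjoint_family_on A (S \<times> S \<times> S)"
    by (auto simp: disjoint_family_on_def A_def prod_eq_iff)
  \<comment> \<open>Total mass 1 makes the cylinders a partition of the sample space up to a null set.\<close>
  have total: "(\<Sum>\<tau>\<in>S \<times> S \<times> S. prob (A \<tau>)) = 1"
    using sum_A[of "\<lambda>_. True" "\<lambda>_. True"]
    by (simp add: sum_distrib_left[symmetric] transition_row_sum sum_IP)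
  have "{\<omega> \<in> space M. P (X s \<omega>) \<and> R (X (t + s) \<omega>)}
      = {\<omega> \<in> space M. P (X s \<omega>)} \<inter> {\<omega> \<in> space M. R (X (t + s) \<omega>)}" by auto
  then have "measure M {\<omega> \<in> space M. P (X s \<omega>) \<and> R (X (t + s) \<omega>)}
      = (\<Sum>\<tau>\<in>S \<times> S \<times> S. prob ({\<omega> \<in> space M. P (X s \<omega>) \<and> R (X (t + s) \<omega>)} \<inter> A \<tau>))"
    using events assms finite_states
    by (intro prob_eq_sum_partition[OF _ disjoint A_events total]) auto
  also have "\<dots> = (\<Sum>\<tau>\<in>S \<times> S \<times> S. if P (fst (snd \<tau>)) \<and> R (snd (snd \<tau>)) then prob (A \<tau>) else 0)"
  proof (intro sum.cong refl)
    fix \<tau> :: "'v state \<times> 'v state \<times> 'v state"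
    have "{\<omega> \<in> space M. P (X s \<omega>) \<and> R (X (t + s) \<omega>)} \<inter> A \<tau>
        = (if P (fst (snd \<tau>)) \<and> R (snd (snd \<tau>)) then A \<tau> else {})"
      by (auto simp: A_def)
    then show "prob ({\<omega> \<in> space M. P (X s \<omega>) \<and> R (X (t + s) \<omega>)} \<inter> A \<tau>)
        = (if P (fst (snd \<tau>)) \<and> R (snd (snd \<tau>)) then prob (A \<tau>) else 0)"
      by simp
  qed
  finally show ?thesis unfolding sum_A .
qed

lemma spin_marginal:
  assumes X: "markov_IP_process V E p M X" and "0 \<le> s"
  shows "measure M {\<omega> \<in> space M. snd (X s \<omega>) = \<sigma>} = (\<Sum>a\<in>S. if snd a = \<sigma> then IP V E p a else 0)"
proof -
  have "(\<Sum>b\<in>S. if snd a = \<sigma> then IP V E p a * transition V E p 0 a b else 0)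
      = (if snd a = \<sigma> then IP V E p a else 0)" if "a \<in> S" for a
    using transition_row_sum[OF that] by (simp add: sum_distrib_left[symmetric])
  then show ?thesis
    using two_time_marginal[OF X \<open>0 \<le> s\<close> order_refl, of "\<lambda>a. snd a = \<sigma>" "\<lambda>_. True"] by simp
qed

lemma transition_div_tendsto:
  "a \<in> S \<Longrightarrow> b \<in> S \<Longrightarrow> a \<noteq> b \<Longrightarrow> ((\<lambda>t. transition V E p t a b / t) \<longlongrightarrow> Q a b) (at_right 0)"
  unfolding transition_eq_mexp by (rule mexp_div_tendsto[OF finite_states])

lemma sum_IP_generator_flip_spin:
  assumes \<sigma>: "\<sigma> \<in> V \<rightarrow>\<^sub>E {-1, 1}" and x: "x \<in> V"
  shows "(\<Sum>a\<in>S. \<Sum>b\<in>S. if snd a = \<sigma> \<and> snd b = flip_spin \<sigma> x then IP V E p a * Q a b else 0)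
       = (\<Sum>a\<in>S. if snd a = \<sigma> \<and> closed_at E x (fst a) then IP V E p a else 0)"
proof (intro sum.cong refl)
  fix a assume "a \<in> S"
  show "(\<Sum>b\<in>S. if snd a = \<sigma> \<and> snd b = flip_spin \<sigma> x then IP V E p a * Q a b else 0)
      = (if snd a = \<sigma> \<and> closed_at E x (fst a) then IP V E p a else 0)"
  proof (cases "snd a = \<sigma>")
    case True
    have "(\<Sum>b\<in>S. if snd b = flip_spin \<sigma> x then IP V E p a * Q a b else 0)
        = IP V E p a * (\<Sum>b\<in>S. if snd b = flip_spin \<sigma> x then Q a b else 0)"
      by (simp add: sum_distrib_left if_distrib cong: if_cong)
    then show ?thesis
      using sum_generator_flip_spin[OF \<open>a \<in> S\<close> True \<sigma> x] True by simp
  qed simp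
qed

lemma spin_flip_rate_limit:
  assumes X: "markov_IP_process V E p M X" and "0 \<le> s" and \<sigma>: "\<sigma> \<in> V \<rightarrow>\<^sub>E {-1, 1}" and x: "x \<in> V"
  shows "((\<lambda>t. measure M {\<omega> \<in> space M. snd (X (t + s) \<omega>) = flip_spin \<sigma> x \<and> snd (X s \<omega>) = \<sigma>} / t)
          \<longlongrightarrow> (\<Sum>a\<in>S. if snd a = \<sigma> \<and> closed_at E x (fst a) then IP V E p a else 0)) (at_right 0)"
proof -
  define f where "f t = (\<Sum>a\<in>S. \<Sum>b\<in>S. if snd a = \<sigma> \<and> snd b = flip_spin \<sigma> x
      then IP V E p a * (transition V E p t a b / t) else 0)" for t
  have "(f \<longlongrightarrow> (\<Sum>a\<in>S. \<Sum>b\<in>S. if snd a = \<sigma> \<and> snd b = flip_spin \<sigma> x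
      then IP V E p a * Q a b else 0)) (at_right 0)"
    unfolding f_def
  proof (intro tendsto_sum)
    fix a b assume "a \<in> S" "b \<in> S"
    show "((\<lambda>t. if snd a = \<sigma> \<and> snd b = flip_spin \<sigma> x
          then IP V E p a * (transition V E p t a b / t) else 0)
        \<longlongrightarrow> (if snd a = \<sigma> \<and> snd b = flip_spin \<sigma> x then IP V E p a * Q a b else 0)) (at_right 0)"
    proof (cases "snd a = \<sigma> \<and> snd b = flip_spin \<sigma> x")
      case True
      then have "a \<noteq> b" using flip_spin_neq[OF \<sigma> x] by auto
      then show ?thesis
        unfolding if_P[OF True] by (intro tendsto_mult_left transition_div_tendsto \<open>a \<in> S\<close> \<open>b \<in> S\<close>)
    next
      case False
      show ?thesis unfolding if_not_P[OF False] by (rule tendsto_const)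
    qed
  qed
  also note sum_IP_generator_flip_spin[OF \<sigma> x]
  finally have "(f \<longlongrightarrow> (\<Sum>a\<in>S. if snd a = \<sigma> \<and> closed_at E x (fst a) then IP V E p a else 0)) (at_right 0)" .
  moreover have "f t = measure M {\<omega> \<in> space M. snd (X (t + s) \<omega>) = flip_spin \<sigma> x \<and> snd (X s \<omega>) = \<sigma>} / t"
    if "t > 0" for t
    using two_time_marginal[OF X \<open>0 \<le> s\<close>, of t "\<lambda>a. snd a = \<sigma>" "\<lambda>b. snd b = flip_spin \<sigma> x"] that
    by (simp add: f_def conj_commute sum_divide_distrib if_distrib[of "\<lambda>z. z / t"] cong: if_cong)
  then have "\<forall>\<^sub>F t in at_right 0.
      f t = measure M {\<omega> \<in> space M. snd (X (t + s) \<omega>) = flip_spin \<sigma> x \<and> snd (X s \<omega>) = \<sigma>} / t"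
    by (auto simp: eventually_at_right_field intro: exI[of _ 1])
  ultimately show ?thesis
    by (rule Lim_transform_eventually)
qed

end

theorem proposition2:
  fixes V :: "'v set" and E :: "'v set set" and p :: real
    and M :: "'w measure" and X :: "real \<Rightarrow> 'w \<Rightarrow> 'v state"
    and x :: 'v and \<sigma> :: "'v \<Rightarrow> int" and s :: real
  assumes "fin_graph V E"
    and "0 \<le> p" and "p \<le> 1"
    and "markov_IP_process V E p M X"
    and "x \<in> V" and "\<sigma> \<in> V \<rightarrow>\<^sub>E {-1, 1}" and "0 \<le> s"
    and "measure M {\<omega> \<in> space M. snd (X s \<omega>) = \<sigma>} > 0"
  shows "((\<lambda>t. (measure M {\<omega> \<in> space M. snd (X (t + s) \<omega>) = flip_spin \<sigma> x \<and> snd (X s \<omega>) = \<sigma>}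
                / measure M {\<omega> \<in> space M. snd (X s \<omega>) = \<sigma>}) / t)
          \<longlongrightarrow> (1 - p) ^ card {e \<in> edges_at E x. delta \<sigma> e = 1}) (at_right 0)"
proof -
  interpret ip_graph V E p
    using assms(1-3) by unfold_locales
  define joint where "joint t = measure M {\<omega> \<in> space M. snd (X (t + s) \<omega>) = flip_spin \<sigma> x \<and> snd (X s \<omega>) = \<sigma>}"
    for t
  define D where "D = measure M {\<omega> \<in> space M. snd (X s \<omega>) = \<sigma>}"
  have D: "D = (\<Sum>a\<in>S. if snd a = \<sigma> then IP V E p a else 0)"
    unfolding D_def using spin_marginal[OF assms(4,7)] .
  have "((\<lambda>t. joint t / t / D)
      \<longlongrightarrow> (\<Sum>a\<in>S. if snd a = \<sigma> \<and> closed_at E x (fst a) then IP V E p a else 0) / D) (at_right 0)"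
    unfolding joint_def using assms(8) D_def
    by (intro tendsto_divide tendsto_const spin_flip_rate_limit[OF assms(4,7,6,5)]) simp
  moreover have "(\<Sum>a\<in>S. if snd a = \<sigma> \<and> closed_at E x (fst a) then IP V E p a else 0) / D
      = (1 - p) ^ card {e \<in> edges_at E x. delta \<sigma> e = 1}"
    using IP_closed_fibre_ratio[OF assms(6), of x] assms(8) unfolding D_def[symmetric] D by simp
  ultimately show ?thesis
    unfolding joint_def D_def by (simp add: field_simps)
qed

end
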